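(* Let $\omega$ be a primitive third root of unity, $S=\mathbb{C}\langle x,y,z\rangle/(x^2,y^2,z^2)$, and for $t\in\mathbb{C}^*$ let $T_t$ be the quotient of $S$ by the two-sided ideal generated by $(zxy+\omega xyz+\omega^2 yzx)+t(yxz+\omega zyx+\omega^2 xzy)$ and $(zxy+\omega^2 xyz+\omega yzx)+t(yxz+\omega^2 zyx+\omega xzy)$; let $M_t=T_t/(g_t)$ with $g_t=(zxy+xyz+yzx)+t(yxz+zyx+xzy)$. If $-t$ is a primitive $n$th root of unity, then $M_t$ is a finite module over its center.
   Context: Grading: $\deg x=\deg y=\deg z=1$. *)

theory Defs
  imports Complex_Main "HOL-Library.Poly_Mapping"
begin

datatype var = X | Y | Z

datatype word = Word "var list"

instantiation word :: monoid_add
begin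
definition zero_word :: word where "zero_word = Word []"
fun plus_word :: "word \<Rightarrow> word \<Rightarrow> word" where
  "plus_word (Word a) (Word b) = Word (a @ b)"
instance
proof
  fix a b c :: word
  show "a + b + c = a + (b + c)" by (cases a; cases b; cases c) simp
  show "0 + a = a" by (cases a) (simp add: zero_word_def)
  show "a + 0 = a" by (cases a) (simp add: zero_word_def)
qed
end

text \<open>Noncommutative polynomials: finitely supported functions on words, with
  convolution product (the monoid algebra of the free monoid).\<close>
type_synonym fralg = "word \<Rightarrow>\<^sub>0 complex"

definition scal :: "complex \<Rightarrow> fralg" where
  "scal c = Poly_Mapping.single (Word []) c"

definition gx :: fralg where "gx = Poly_Mapping.single (Word [X]) 1"
definition gy :: fralg where "gy = Poly_Mapping.single (Word [Y]) 1"
definition gz :: fralg where "gz = Poly_Mapping.single (Word [Z]) 1"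

inductive_set tsideal :: "'a::ring_1 set \<Rightarrow> 'a set" for G :: "'a set" where
  zero: "0 \<in> tsideal G"
| gen: "g \<in> G \<Longrightarrow> a * g * b \<in> tsideal G"
| add: "p \<in> tsideal G \<Longrightarrow> q \<in> tsideal G \<Longrightarrow> p + q \<in> tsideal G"

definition central_mod :: "'a::ring_1 set \<Rightarrow> 'a \<Rightarrow> bool" where
  "central_mod I a \<longleftrightarrow> (\<forall>b. a * b - b * a \<in> I)"

definition finite_over_center :: "'a::ring_1 set \<Rightarrow> bool" where
  "finite_over_center I \<longleftrightarrow>
     (\<exists>F. finite F \<and> (\<forall>a. \<exists>c. (\<forall>m\<in>F. central_mod I (c m)) \<and>
                                a - (\<Sum>m\<in>F. c m * m) \<in> I))"

definition rel1 :: "complex \<Rightarrow> complex \<Rightarrow> fralg" where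
  "rel1 \<omega> t = (gz*gx*gy + scal \<omega> * gx*gy*gz + scal (\<omega>^2) * gy*gz*gx)
     + scal t * (gy*gx*gz + scal \<omega> * gz*gy*gx + scal (\<omega>^2) * gx*gz*gy)"

definition rel2 :: "complex \<Rightarrow> complex \<Rightarrow> fralg" where
  "rel2 \<omega> t = (gz*gx*gy + scal (\<omega>^2) * gx*gy*gz + scal \<omega> * gy*gz*gx)
     + scal t * (gy*gx*gz + scal (\<omega>^2) * gz*gy*gx + scal \<omega> * gx*gz*gy)"

definition gt :: "complex \<Rightarrow> fralg" where
  "gt t = (gz*gx*gy + gx*gy*gz + gy*gz*gx) + scal t * (gy*gx*gz + gz*gy*gx + gx*gz*gy)"

definition Mt_ideal :: "complex \<Rightarrow> complex \<Rightarrow> fralg set" where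
  "Mt_ideal \<omega> t = tsideal {gx*gx, gy*gy, gz*gz, rel1 \<omega> t, rel2 \<omega> t, gt t}"

end

theory Submission
  imports Defs
begin

text \<open>Averaging the two defining relations and g_t over the cube roots of unity shows
  that, for distinct letters a, b, c, the word abc equals l cba modulo the ideal with
  l = -t or l = -1/t, so l^n = 1. Hence every word a(bc)^k a vanishes, and every
  surviving word alternates with a fixed pivot letter b. The element (ab)^n + (ba)^n is
  central: a third letter passes through (ab)^n at the cost l^n = 1, while a and b
  create squares. A pivoted word of length at least 4n + 4 has n + 1 equal letters a at
  its non-pivot positions; pushing the other letters outwards produces a factor
  (ab)^n a = ((ab)^n + (ba)^n) a, a central element times a shorter word. By induction
  on length, the finitely many words shorter than 4n + 4 span M_t over its center.\<close>

lemma tsideal_generator: "g \<in> G \<Longrightarrow> g \<in> tsideal G"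
  using tsideal.gen[of g G 1 1] by simp

lemma tsideal_mult_left: "p \<in> tsideal G \<Longrightarrow> c * p \<in> tsideal G"
proof (induction rule: tsideal.induct)
  case (gen g a b)
  then show ?case using tsideal.gen[of g G "c * a" b] by (simp add: mult.assoc)
qed (simp_all add: tsideal.zero distrib_left tsideal.add)

lemma tsideal_mult_right: "p \<in> tsideal G \<Longrightarrow> p * c \<in> tsideal G"
proof (induction rule: tsideal.induct)
  case (gen g a b)
  then show ?case using tsideal.gen[of g G a "b * c"] by (simp add: mult.assoc)
qed (simp_all add: tsideal.zero distrib_right tsideal.add)

lemma tsideal_uminus: "p \<in> tsideal G \<Longrightarrow> - p \<in> tsideal G"
  using tsideal_mult_left[of p G "- 1"] by simp

lemma tsideal_diff: "p \<in> tsideal G \<Longrightarrow> q \<in> tsideal G \<Longrightarrow> p - q \<in> tsideal G"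
  using tsideal.add[OF _ tsideal_uminus] by (metis diff_conv_add_uminus)

lemma central_mod_zero: "central_mod (tsideal G) 0"
  by (simp add: central_mod_def tsideal.zero)

lemma central_mod_one: "central_mod (tsideal G) 1"
  by (simp add: central_mod_def tsideal.zero)

lemma central_mod_add:
  assumes "central_mod (tsideal G) c" "central_mod (tsideal G) d"
  shows "central_mod (tsideal G) (c + d)"
  unfolding central_mod_def
proof
  fix b
  have "(c + d) * b - b * (c + d) = (c * b - b * c) + (d * b - b * d)"
    by (simp add: algebra_simps)
  then show "(c + d) * b - b * (c + d) \<in> tsideal G"
    using assms by (simp add: central_mod_def tsideal.add)
qed

lemma central_mod_mult:
  assumes "central_mod (tsideal G) c" "central_mod (tsideal G) d"
  shows "central_mod (tsideal G) (c * d)"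
  unfolding central_mod_def
proof
  fix b
  have "c * d * b - b * (c * d) = c * (d * b - b * d) + (c * b - b * c) * d"
    by (simp add: algebra_simps)
  then show "c * d * b - b * (c * d) \<in> tsideal G"
    using assms by (simp add: central_mod_def tsideal.add tsideal_mult_left tsideal_mult_right)
qed

definition center_span :: "'a::ring_1 set \<Rightarrow> 'a set \<Rightarrow> 'a \<Rightarrow> bool" where
  "center_span I F a \<longleftrightarrow>
     (\<exists>c. (\<forall>m\<in>F. central_mod I (c m)) \<and> a - (\<Sum>m\<in>F. c m * m) \<in> I)"

lemma finite_over_center_iff:
  "finite_over_center I \<longleftrightarrow> (\<exists>F. finite F \<and> (\<forall>a. center_span I F a))"
  by (simp add: finite_over_center_def center_span_def)

lemma center_span_zero: "center_span (tsideal G) F 0"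
  unfolding center_span_def
  by (intro exI[of _ "\<lambda>_. 0"]) (simp add: central_mod_zero tsideal.zero)

lemma center_span_member:
  assumes "finite F" "m \<in> F"
  shows "center_span (tsideal G) F m"
proof -
  have "(\<Sum>m'\<in>F. (if m' = m then 1 else 0) * m') = (\<Sum>m'\<in>F. if m' = m then m' else 0)"
    by (rule sum.cong) simp_all
  also have "\<dots> = m"
    using assms by simp
  finally have "(\<Sum>m'\<in>F. (if m' = m then 1 else 0) * m') = m" .
  then show ?thesis unfolding center_span_def
    by (intro exI[of _ "\<lambda>m'. if m' = m then 1 else 0"])
       (simp add: central_mod_zero central_mod_one tsideal.zero)
qed

lemma center_span_add:
  assumes "center_span (tsideal G) F a" "center_span (tsideal G) F b"
  shows "center_span (tsideal G) F (a + b)"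
proof -
  obtain c d where c: "\<forall>m\<in>F. central_mod (tsideal G) (c m)" "a - (\<Sum>m\<in>F. c m * m) \<in> tsideal G"
    and d: "\<forall>m\<in>F. central_mod (tsideal G) (d m)" "b - (\<Sum>m\<in>F. d m * m) \<in> tsideal G"
    using assms unfolding center_span_def by blast
  have "a + b - (\<Sum>m\<in>F. (c m + d m) * m)
      = (a - (\<Sum>m\<in>F. c m * m)) + (b - (\<Sum>m\<in>F. d m * m))"
    by (simp add: distrib_right sum.distrib)
  also have "\<dots> \<in> tsideal G"
    using c d by (simp only: tsideal.add)
  finally show ?thesis unfolding center_span_def using c d
    by (intro exI[of _ "\<lambda>m. c m + d m"]) (simp add: central_mod_add)
qed

lemma center_span_mult_central:
  assumes "central_mod (tsideal G) c" "center_span (tsideal G) F a"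
  shows "center_span (tsideal G) F (c * a)"
proof -
  obtain d where d: "\<forall>m\<in>F. central_mod (tsideal G) (d m)" "a - (\<Sum>m\<in>F. d m * m) \<in> tsideal G"
    using assms(2) unfolding center_span_def by blast
  have "c * a - (\<Sum>m\<in>F. (c * d m) * m) = c * (a - (\<Sum>m\<in>F. d m * m))"
    by (simp add: right_diff_distrib sum_distrib_left mult.assoc)
  then show ?thesis unfolding center_span_def using assms(1) d
    by (intro exI[of _ "\<lambda>m. c * d m"]) (simp add: central_mod_mult tsideal_mult_left)
qed

lemma center_span_mod:
  assumes "a - b \<in> tsideal G" "center_span (tsideal G) F b"
  shows "center_span (tsideal G) F a"
proof -
  obtain d where d: "\<forall>m\<in>F. central_mod (tsideal G) (d m)" "b - (\<Sum>m\<in>F. d m * m) \<in> tsideal G"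
    using assms(2) unfolding center_span_def by blast
  have "a - (\<Sum>m\<in>F. d m * m) = (a - b) + (b - (\<Sum>m\<in>F. d m * m))"
    by simp
  then show ?thesis unfolding center_span_def using assms(1) d
    by (intro exI[of _ d]) (simp only: tsideal.add)
qed

definition word_poly :: "var list \<Rightarrow> fralg" where
  "word_poly w = Poly_Mapping.single (Word w) 1"

lemma word_poly_append: "word_poly (u @ v) = word_poly u * word_poly v"
  by (simp add: word_poly_def mult_single)

lemma word_poly_Nil: "word_poly [] = 1"
  by (simp add: word_poly_def zero_word_def[symmetric])

lemma generators_word_poly: "gx = word_poly [X]" "gy = word_poly [Y]" "gz = word_poly [Z]"
  by (simp_all add: gx_def gy_def gz_def word_poly_def)

lemma scal_mult_single: "scal c * Poly_Mapping.single (Word w) d = Poly_Mapping.single (Word w) (c * d)"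
  by (simp add: scal_def mult_single)

lemma scal_mult_word_poly: "scal c * word_poly w = Poly_Mapping.single (Word w) c"
  by (simp add: word_poly_def scal_mult_single)

lemma scal_mult: "scal a * scal b = scal (a * b)"
  by (simp add: scal_def mult_single)

lemma scal_one: "scal 1 = 1"
  by (simp add: scal_def zero_word_def[symmetric])

lemma scal_uminus: "scal (- a) = - scal a"
  by (simp add: scal_def single_uminus)

lemma fralg_induct [case_names zero add_monomial]:
  assumes "P 0" and "\<And>p c w. P p \<Longrightarrow> P (p + scal c * word_poly w)"
  shows "P p"
proof (induction p rule: update_induct)
  case (update f a b)
  obtain w where a: "a = Word w" by (cases a)
  have "Poly_Mapping.update a b f = f + scal b * word_poly w"
    using update.hyps(1) unfolding a scal_mult_word_poly
    by (intro poly_mapping_eqI) (auto simp: lookup_update lookup_add lookup_single in_keys_iff when_def)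
  then show ?case using assms(2) update.IH by simp
qed (rule assms(1))

lemma scal_commute: "scal c * p = p * scal c"
proof (induction p rule: fralg_induct)
  case (add_monomial p d w)
  have "scal c * (scal d * word_poly w) = scal d * word_poly w * scal c"
    by (simp add: scal_mult_word_poly scal_def word_poly_def mult_single mult.commute zero_word_def[symmetric])
  with add_monomial show ?case by (simp add: distrib_left distrib_right)
qed simp

lemma central_mod_scal: "central_mod (tsideal G) (scal c)"
  by (simp add: central_mod_def scal_commute tsideal.zero)

lemma central_mod_if_commutes_with_letters:
  assumes letter: "\<And>v. c * word_poly [v] - word_poly [v] * c \<in> tsideal G"
  shows "central_mod (tsideal G) c"
proof -
  have word: "c * word_poly w - word_poly w * c \<in> tsideal G" for w
  proof (induction w)
    case Nil
    then show ?case by (simp add: word_poly_Nil tsideal.zero)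
  next
    case (Cons v w)
    have "c * word_poly (v # w) - word_poly (v # w) * c
        = (c * word_poly [v] - word_poly [v] * c) * word_poly w
          + word_poly [v] * (c * word_poly w - word_poly w * c)"
      using word_poly_append[of "[v]" w] by (simp add: algebra_simps)
    then show ?case
      using Cons letter by (simp add: tsideal.add tsideal_mult_left tsideal_mult_right)
  qed
  show ?thesis unfolding central_mod_def
  proof
    fix p
    show "c * p - p * c \<in> tsideal G"
    proof (induction p rule: fralg_induct)
      case (add_monomial p d w)
      have "c * (p + scal d * word_poly w) - (p + scal d * word_poly w) * c
          = (c * p - p * c) + scal d * (c * word_poly w - word_poly w * c)"
      proof -
        have "c * (scal d * word_poly w) = scal d * c * word_poly w"
          by (metis mult.assoc scal_commute)
        then show ?thesis by (simp add: algebra_simps)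
      qed
      then show ?case
        using add_monomial word by (simp add: tsideal.add tsideal_mult_left)
    qed (simp add: tsideal.zero)
  qed
qed

section \<open>Words in three letters\<close>

definition alt :: "var \<Rightarrow> var \<Rightarrow> nat \<Rightarrow> var list" where
  "alt a b k = concat (replicate k [a, b])"

lemma alt_0 [simp]: "alt a b 0 = []"
  by (simp add: alt_def)

lemma alt_Suc: "alt a b (Suc k) = a # b # alt a b k"
  by (simp add: alt_def)

lemma alt_Suc_right: "alt a b (Suc k) = alt a b k @ [a, b]"
  by (induction k) (simp_all add: alt_Suc)

lemma Cons_alt: "a # alt b a k = alt a b k @ [a]"
  by (induction k) (simp_all add: alt_Suc)

lemma length_alt [simp]: "length (alt a b k) = 2 * k"
  by (induction k) (simp_all add: alt_Suc)

lemma alt_add: "alt a b (k + m) = alt a b k @ alt a b m"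
  by (induction k) (simp_all add: alt_Suc)

definition pivoted :: "var \<Rightarrow> var list \<Rightarrow> var list" where
  "pivoted b qs = concat (map (\<lambda>q. [q, b]) qs)"

lemma pivoted_Nil [simp]: "pivoted b [] = []"
  and pivoted_Cons [simp]: "pivoted b (q # qs) = q # b # pivoted b qs"
  and pivoted_append: "pivoted b (qs @ rs) = pivoted b qs @ pivoted b rs"
  by (simp_all add: pivoted_def)

lemma length_pivoted [simp]: "length (pivoted b qs) = 2 * length qs"
  by (induction qs) simp_all

fun has_pivot :: "var \<Rightarrow> var list \<Rightarrow> bool" where
  "has_pivot b (x # y # r) \<longleftrightarrow> (x = b \<or> y = b) \<and> has_pivot b (y # r)"
| "has_pivot b _ \<longleftrightarrow> True"

definition sandwich :: "var list \<Rightarrow> bool" where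
  "sandwich w \<longleftrightarrow> (\<exists>u a b c k v. distinct [a, b, c] \<and> w = u @ a # alt b c k @ a # v)"

lemma var_third: "(a :: var) \<noteq> b \<Longrightarrow> \<exists>c. distinct [a, b, c] \<and> (\<forall>v. v = a \<or> v = b \<or> v = c)"
  by (cases a; cases b) (auto intro: var.exhaust)

lemma sandwich_append:
  assumes "sandwich w"
  shows "sandwich (u @ w @ v)"
proof -
  obtain u' a b c k v' where "distinct [a, b, c]" and "w = u' @ a # alt b c k @ a # v'"
    using assms unfolding sandwich_def by blast
  then have "distinct [a, b, c] \<and> u @ w @ v = (u @ u') @ a # alt b c k @ a # (v' @ v)"
    by simp
  then show ?thesis unfolding sandwich_def by blast
qed

lemma sandwich_square: "sandwich (u @ [a, a] @ v)"
proof -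
  obtain b where "b \<noteq> a" by (metis var.distinct(1) var.distinct(3))
  then obtain c where "distinct [a, b, c]" using var_third[of a b] by auto
  moreover have "u @ [a, a] @ v = u @ a # alt b c 0 @ a # v"
    by simp
  ultimately show ?thesis unfolding sandwich_def by blast
qed

lemma sandwich_pivoted:
  assumes "b \<in> set qs"
  shows "sandwich (pivoted b qs)"
proof -
  obtain qs1 qs2 where "qs = qs1 @ b # qs2"
    using assms by (meson split_list)
  then show ?thesis
    using sandwich_square[of "pivoted b qs1" b "pivoted b qs2"] by (simp add: pivoted_append)
qed

lemma sandwich_or_pivot_step:
  assumes "distinct [x, y, b]"
  shows "has_pivot b (y # r) \<Longrightarrow> sandwich (x # alt y b k @ y # r) \<or> has_pivot y (y # r)"
proof (induction r arbitrary: k rule: induct_list012)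
  case (3 z q r)
  then have z: "z = b" and pivot: "has_pivot b (q # r)"
    using assms by auto
  consider "q = b" | "q = y" | "q = x"
    using assms by (cases q; cases x; cases y; cases b) auto
  then show ?case
  proof cases
    case 1
    then show ?thesis
      using sandwich_square[of "x # alt y b k @ [y]" b r] z by simp
  next
    case 2
    then show ?thesis
      using "3.IH"(1)[of "Suc k"] pivot z by (auto simp: alt_Suc_right)
  next
    case 3
    have "x # alt y b (Suc k) @ x # r = [] @ x # alt y b (Suc k) @ x # r"
      by simp
    then have "sandwich (x # alt y b (Suc k) @ x # r)"
      unfolding sandwich_def using assms by blast
    then show ?thesis using 3 z by (simp add: alt_Suc_right)
  qed
qed simp_all

lemma sandwich_or_pivot: "sandwich w \<or> (\<exists>b. has_pivot b w)"
proof (induction w)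
  case (Cons x w)
  show ?case
  proof (cases "sandwich w")
    case True
    then show ?thesis using sandwich_append[of w "[x]" "[]"] by auto
  next
    case False
    with Cons.IH obtain b where pivot: "has_pivot b w" by blast
    show ?thesis
    proof (cases w)
      case (Cons y r)
      consider "x = b \<or> y = b" | "x = y" | "distinct [x, y, b]"
        by auto
      then show ?thesis
      proof cases
        case 1
        then show ?thesis using pivot Cons by auto
      next
        case 2
        then show ?thesis using sandwich_square[of "[]" x r] Cons by auto
      next
        case 3
        then show ?thesis using sandwich_or_pivot_step[of x y b r 0] pivot Cons by auto
      qed
    qed auto
  qed
qed simp

definition pivot_decomposable :: "var \<Rightarrow> var list \<Rightarrow> bool" where
  "pivot_decomposable b w \<longleftrightarrow>
     (\<exists>u qs v. w = u @ pivoted b qs @ v \<and> u \<in> {[], [b]} \<and> length v \<le> 1)"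

lemma pivot_decomposableI:
  "u \<in> {[], [b]} \<Longrightarrow> length v \<le> 1 \<Longrightarrow> pivot_decomposable b (u @ pivoted b qs @ v)"
  unfolding pivot_decomposable_def by blast

lemma has_pivot_decomposable: "has_pivot b w \<Longrightarrow> \<not> sandwich w \<Longrightarrow> pivot_decomposable b w"
proof (induction w rule: induct_list012)
  case 1
  then show ?case using pivot_decomposableI[of "[]" b "[]" "[]"] by simp
next
  case (2 x)
  then show ?case using pivot_decomposableI[of "[]" b "[x]" "[]"] by simp
next
  case (3 x y r)
  have no_square: "x # y # r \<noteq> u @ [a, a] @ v" for u a v
    using "3.prems"(2) sandwich_square[of u a v] by auto
  have "\<not> sandwich (y # r)"
    using "3.prems"(2) sandwich_append[of "y # r" "[x]" "[]"] by auto
  with "3.prems"(1) obtain u qs v where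
    yr: "y # r = u @ pivoted b qs @ v" and u: "u \<in> {[], [b]}" and v: "length v \<le> 1"
    using "3.IH"(2) unfolding pivot_decomposable_def by auto
  show ?case
  proof (cases "x = b")
    case True
    then have "y \<noteq> b" using no_square[of "[]" b r] by auto
    then have "u = []" using u yr by auto
    then show ?thesis using pivot_decomposableI[of "[b]" b v qs] yr True v by simp
  next
    case False
    then have y: "y = b" using "3.prems"(1) by simp
    consider "u = [b]" | "u = []" "qs = []" | q qs' where "u = []" "qs = q # qs'"
      using u by (cases qs) auto
    then show ?thesis
    proof cases
      case 1
      then show ?thesis using pivot_decomposableI[of "[]" b v "x # qs"] yr y v by simp
    next
      case 2
      then have "r = []" using yr v by (cases v) auto
      then show ?thesis using pivot_decomposableI[of "[]" b "[]" "[x]"] y by simp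
    next
      case 3
      then show ?thesis using yr y no_square[of "[x]" b "pivoted b qs' @ v"] by simp
    qed
  qed
qed

lemma count_list_two_letters:
  "set qs \<subseteq> {a, c} \<Longrightarrow> a \<noteq> c \<Longrightarrow> count_list qs a + count_list qs c = length qs"
  by (induction qs) auto

section \<open>The relations of M_t acting on words\<close>

definition perm_sum :: "complex \<Rightarrow> complex \<Rightarrow> complex \<Rightarrow> complex \<Rightarrow> complex \<Rightarrow> complex \<Rightarrow> fralg" where
  "perm_sum c1 c2 c3 c4 c5 c6 =
     Poly_Mapping.single (Word [Z,X,Y]) c1 + Poly_Mapping.single (Word [X,Y,Z]) c2
     + Poly_Mapping.single (Word [Y,Z,X]) c3 + Poly_Mapping.single (Word [Y,X,Z]) c4
     + Poly_Mapping.single (Word [Z,Y,X]) c5 + Poly_Mapping.single (Word [X,Z,Y]) c6"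

lemma perm_sum_add:
  "perm_sum a1 a2 a3 a4 a5 a6 + perm_sum b1 b2 b3 b4 b5 b6
     = perm_sum (a1 + b1) (a2 + b2) (a3 + b3) (a4 + b4) (a5 + b5) (a6 + b6)"
  by (simp add: perm_sum_def single_add ac_simps)

lemma scal_mult_perm_sum:
  "scal k * perm_sum a1 a2 a3 a4 a5 a6 = perm_sum (k * a1) (k * a2) (k * a3) (k * a4) (k * a5) (k * a6)"
  by (simp add: perm_sum_def distrib_left scal_mult_single)

lemma rel1_perm_sum: "rel1 \<omega> t = perm_sum 1 \<omega> (\<omega>^2) t (t * \<omega>) (t * \<omega>^2)"
  and rel2_perm_sum: "rel2 \<omega> t = perm_sum 1 (\<omega>^2) \<omega> t (t * \<omega>^2) (t * \<omega>)"
  and gt_perm_sum: "gt t = perm_sum 1 1 1 t t t"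
  by (simp_all add: rel1_def rel2_def gt_def perm_sum_def gx_def gy_def gz_def scal_def
      mult_single distrib_left ac_simps)

locale Mt_root_of_unity =
  fixes \<omega> t :: complex and n :: nat
  assumes omega_cube: "\<omega> ^ 3 = 1" and omega_ne_one: "\<omega> \<noteq> 1" and t_nonzero: "t \<noteq> 0"
    and n_pos: "n \<ge> 1" and minus_t_root: "(- t) ^ n = 1"
begin

abbreviation I :: "fralg set" where "I \<equiv> Mt_ideal \<omega> t"

lemma omega_sum: "1 + \<omega> + \<omega>^2 = 0"
proof -
  have "(\<omega> - 1) * (1 + \<omega> + \<omega>^2) = \<omega>^3 - 1"
    by (simp add: algebra_simps power2_eq_square power3_eq_cube)
  then show ?thesis using omega_cube omega_ne_one by simp
qed

lemma square_vanishes: "word_poly [a, a] \<in> I"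
  using tsideal_generator[of _ "{gx*gx, gy*gy, gz*gz, rel1 \<omega> t, rel2 \<omega> t, gt t}"]
  by (cases a) (simp_all add: Mt_ideal_def generators_word_poly word_poly_append[symmetric])

lemma relations_combination: "scal a * rel1 \<omega> t + scal b * rel2 \<omega> t + scal c * gt t \<in> I"
  using tsideal_generator[of _ "{gx*gx, gy*gy, gz*gz, rel1 \<omega> t, rel2 \<omega> t, gt t}"]
  by (simp add: Mt_ideal_def tsideal.add tsideal_mult_left)

text \<open>Discrete Fourier inversion over the cube roots of unity separates the three
  cyclic rotations of xyz in the defining relations.\<close>
lemma cyclic_relations:
  "word_poly [Z,X,Y] + scal t * word_poly [Y,X,Z] \<in> I"
  "word_poly [X,Y,Z] + scal t * word_poly [Z,Y,X] \<in> I"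
  "word_poly [Y,Z,X] + scal t * word_poly [X,Z,Y] \<in> I"
proof -
  have perm_sum_cong: "perm_sum a1 a2 a3 a4 a5 a6 = perm_sum b1 b2 b3 b4 b5 b6"
    if "a1 = b1" "a2 = b2" "a3 = b3" "a4 = b4" "a5 = b5" "a6 = b6" for a1 a2 a3 a4 a5 a6 b1 b2 b3 b4 b5 b6
    using that by simp
  have "scal (1/3) * rel1 \<omega> t + scal (1/3) * rel2 \<omega> t + scal (1/3) * gt t = perm_sum 1 0 0 t 0 0"
    "scal (\<omega>^2/3) * rel1 \<omega> t + scal (\<omega>/3) * rel2 \<omega> t + scal (1/3) * gt t = perm_sum 0 1 0 0 t 0"
    "scal (\<omega>/3) * rel1 \<omega> t + scal (\<omega>^2/3) * rel2 \<omega> t + scal (1/3) * gt t = perm_sum 0 0 1 0 0 t"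
    unfolding rel1_perm_sum rel2_perm_sum gt_perm_sum scal_mult_perm_sum perm_sum_add
    by (rule perm_sum_cong; use omega_sum omega_cube in \<open>simp add: field_simps; algebra\<close>)+
  moreover have "perm_sum 1 0 0 t 0 0 = word_poly [Z,X,Y] + scal t * word_poly [Y,X,Z]"
    "perm_sum 0 1 0 0 t 0 = word_poly [X,Y,Z] + scal t * word_poly [Z,Y,X]"
    "perm_sum 0 0 1 0 0 t = word_poly [Y,Z,X] + scal t * word_poly [X,Z,Y]"
    by (simp_all add: perm_sum_def word_poly_def scal_mult_single)
  ultimately show "word_poly [Z,X,Y] + scal t * word_poly [Y,X,Z] \<in> I"
    "word_poly [X,Y,Z] + scal t * word_poly [Z,Y,X] \<in> I"
    "word_poly [Y,Z,X] + scal t * word_poly [X,Z,Y] \<in> I"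
    using relations_combination by metis+
qed

definition proportional :: "complex \<Rightarrow> var list \<Rightarrow> var list \<Rightarrow> bool" where
  "proportional s w v \<longleftrightarrow> word_poly w - scal s * word_poly v \<in> I"

definition vanishes :: "var list \<Rightarrow> bool" where
  "vanishes w \<longleftrightarrow> word_poly w \<in> I"

definition reducible :: "var list \<Rightarrow> bool" where
  "reducible w \<longleftrightarrow>
     (\<exists>c w'. central_mod I c \<and> length w' < length w \<and> word_poly w - c * word_poly w' \<in> I)"

lemma proportional_refl: "proportional 1 w w"
  by (simp add: proportional_def scal_one Mt_ideal_def tsideal.zero)

lemma proportional_trans: "proportional s w v \<Longrightarrow> proportional r v u \<Longrightarrow> proportional (s * r) w u"
proof -
  assume "proportional s w v" "proportional r v u"
  have "word_poly w - scal (s * r) * word_poly u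
      = (word_poly w - scal s * word_poly v) + scal s * (word_poly v - scal r * word_poly u)"
    by (simp add: algebra_simps mult.assoc[symmetric] scal_mult)
  also have "\<dots> \<in> I"
    using \<open>proportional s w v\<close> \<open>proportional r v u\<close>
    unfolding proportional_def Mt_ideal_def by (simp add: tsideal.add tsideal_mult_left)
  finally show ?thesis
    unfolding proportional_def .
qed

lemma proportional_append:
  assumes "proportional s v v'"
  shows "proportional s (u @ v @ u') (u @ v' @ u')"
proof -
  have "scal s * (word_poly u * word_poly v' * word_poly u')
      = word_poly u * (scal s * word_poly v') * word_poly u'"
    by (metis mult.assoc scal_commute)
  then have "word_poly (u @ v @ u') - scal s * word_poly (u @ v' @ u')
      = word_poly u * (word_poly v - scal s * word_poly v') * word_poly u'"
    by (simp add: word_poly_append algebra_simps)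
  then show ?thesis
    using assms unfolding proportional_def Mt_ideal_def by (simp add: tsideal_mult_left tsideal_mult_right)
qed

lemma proportional_of_relation:
  assumes "word_poly p + scal t * word_poly q \<in> I"
  shows "\<exists>l. l ^ n = 1 \<and> proportional l p q" "\<exists>l. l ^ n = 1 \<and> proportional l q p"
proof -
  show "\<exists>l. l ^ n = 1 \<and> proportional l p q"
    using assms minus_t_root by (intro exI[of _ "- t"]) (simp add: proportional_def scal_uminus)
  have "scal (1 / t) * (word_poly p + scal t * word_poly q) = word_poly q - scal (- 1 / t) * word_poly p"
    using t_nonzero by (simp add: distrib_left mult.assoc[symmetric] scal_mult scal_one scal_uminus)
  moreover have "(- 1 / t) ^ n = 1"
  proof -
    have "- 1 / t = 1 / (- t)" by simp
    then show ?thesis using minus_t_root by (simp only: power_one_over) simp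
  qed
  ultimately show "\<exists>l. l ^ n = 1 \<and> proportional l q p"
    using tsideal_mult_left[OF assms[unfolded Mt_ideal_def], of "scal (1 / t)"]
    unfolding proportional_def Mt_ideal_def by (intro exI[of _ "- 1 / t"]) simp
qed

lemma reversal_proportional:
  assumes "distinct [a, b, c]"
  shows "\<exists>l. l ^ n = 1 \<and> proportional l [a, b, c] [c, b, a]"
  using proportional_of_relation[OF cyclic_relations(1)] proportional_of_relation[OF cyclic_relations(2)]
    proportional_of_relation[OF cyclic_relations(3)] assms
  by (cases a; cases b; cases c) auto

lemma vanishes_append: "vanishes v \<Longrightarrow> vanishes (u @ v @ u')"
  by (simp add: vanishes_def word_poly_append Mt_ideal_def tsideal_mult_left tsideal_mult_right)

lemma vanishes_proportional: "proportional s w v \<Longrightarrow> vanishes v \<Longrightarrow> vanishes w"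
proof -
  assume "proportional s w v" "vanishes v"
  moreover have "word_poly w = (word_poly w - scal s * word_poly v) + scal s * word_poly v"
    by simp
  ultimately show ?thesis
    unfolding proportional_def vanishes_def Mt_ideal_def by (metis tsideal.add tsideal_mult_left)
qed

lemma vanishes_bracketed_alt:
  assumes "distinct [a, b, c]"
  shows "vanishes (a # alt b c k @ [a])"
proof (induction k)
  case 0
  then show ?case using square_vanishes by (simp add: vanishes_def)
next
  case (Suc k)
  obtain l where "proportional l [a, b, c] [c, b, a]"
    using reversal_proportional assms by blast
  then have "proportional l ([] @ [a, b, c] @ (alt b c k @ [a])) ([] @ [c, b, a] @ (alt b c k @ [a]))"
    by (rule proportional_append)
  moreover have "vanishes ([c, b] @ (a # alt b c k @ [a]) @ [])"
    using Suc by (intro vanishes_append)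
  ultimately show ?case by (simp add: alt_Suc vanishes_proportional)
qed

lemma vanishes_if_sandwich: "sandwich w \<Longrightarrow> vanishes w"
  unfolding sandwich_def
  using vanishes_append[OF vanishes_bracketed_alt] by (metis append.assoc append_Cons append_Nil)

lemma reducible_if_vanishes: "vanishes w \<Longrightarrow> w \<noteq> [] \<Longrightarrow> reducible w"
  unfolding reducible_def vanishes_def
  by (rule exI[of _ 0], rule exI[of _ "[]"]) (simp add: Mt_ideal_def central_mod_zero)

lemma reducible_append:
  assumes "reducible v"
  shows "reducible (u @ v @ u')"
proof -
  obtain c w' where c: "central_mod I c" and len: "length w' < length v"
    and red: "word_poly v - c * word_poly w' \<in> I"
    using assms unfolding reducible_def by blast
  have "word_poly (u @ v @ u') - c * word_poly (u @ w' @ u')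
      = word_poly u * (word_poly v - c * word_poly w') * word_poly u'
        - (c * word_poly u - word_poly u * c) * word_poly w' * word_poly u'"
    by (simp add: word_poly_append algebra_simps)
  moreover have "word_poly u * (word_poly v - c * word_poly w') * word_poly u' \<in> I"
    using red by (simp add: Mt_ideal_def tsideal_mult_left tsideal_mult_right)
  moreover have "(c * word_poly u - word_poly u * c) * word_poly w' * word_poly u' \<in> I"
    using c by (simp add: central_mod_def Mt_ideal_def tsideal_mult_right)
  ultimately have "word_poly (u @ v @ u') - c * word_poly (u @ w' @ u') \<in> I"
    by (simp add: Mt_ideal_def tsideal_diff)
  then show ?thesis
    unfolding reducible_def using c len by (intro exI[of _ c] exI[of _ "u @ w' @ u'"]) simp
qed

lemma reducible_proportional:
  assumes "proportional s w v" "length v = length w" "reducible v"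
  shows "reducible w"
proof -
  obtain c w' where c: "central_mod I c" and len: "length w' < length v"
    and red: "word_poly v - c * word_poly w' \<in> I"
    using assms(3) unfolding reducible_def by blast
  have "word_poly w - (scal s * c) * word_poly w'
      = (word_poly w - scal s * word_poly v) + scal s * (word_poly v - c * word_poly w')"
    by (simp add: algebra_simps mult.assoc)
  then have "word_poly w - (scal s * c) * word_poly w' \<in> I"
    using assms(1) red unfolding proportional_def Mt_ideal_def by (metis tsideal.add tsideal_mult_left)
  moreover have "central_mod I (scal s * c)"
    using c unfolding Mt_ideal_def by (intro central_mod_mult central_mod_scal)
  ultimately show ?thesis
    unfolding reducible_def using len assms(2) by (intro exI[of _ "scal s * c"] exI[of _ w']) simp
qed

section \<open>A central element and the reduction of long words\<close>

definition alt_sum :: "var \<Rightarrow> var \<Rightarrow> fralg" where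
  "alt_sum a b = word_poly (alt a b n) + word_poly (alt b a n)"

lemma letter_through_alt:
  assumes "distinct [c, a, b]"
  shows "\<exists>l. l ^ n = 1 \<and> (\<forall>k. proportional (l ^ k) (c # alt a b k) (alt b a k @ [c]))"
proof -
  obtain l where "l ^ n = 1" and l: "proportional l [c, a, b] [b, a, c]"
    using reversal_proportional assms by blast
  moreover have "proportional (l ^ k) (c # alt a b k) (alt b a k @ [c])" for k
  proof (induction k)
    case 0
    then show ?case using proportional_refl by simp
  next
    case (Suc k)
    have "proportional l (c # a # b # alt a b k) (b # a # c # alt a b k)"
      using proportional_append[OF l, of "[]" "alt a b k"] by simp
    moreover have "proportional (l ^ k) (b # a # c # alt a b k) (b # a # alt b a k @ [c])"
      using proportional_append[OF Suc, of "[b, a]" "[]"] by simp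
    ultimately show ?case
      using proportional_trans by (fastforce simp: alt_Suc)
  qed
  ultimately show ?thesis by blast
qed

lemma vanishes_Cons_alt: "vanishes (a # alt a b n)"
  and vanishes_alt_snoc: "vanishes (alt b a n @ [a])"
proof -
  obtain m where m: "n = Suc m" using n_pos by (cases n) auto
  show "vanishes (a # alt a b n)"
    using vanishes_if_sandwich[OF sandwich_square[of "[]" a "b # alt a b m"]] by (simp add: m alt_Suc)
  show "vanishes (alt b a n @ [a])"
    using vanishes_if_sandwich[OF sandwich_square[of "alt b a m @ [b]" a "[]"]] by (simp add: m alt_Suc_right)
qed

text \<open>Passing c through (ab)^n costs l^n = 1; this is where the hypothesis on -t enters.\<close>
lemma letter_commutes_alt:
  assumes "distinct [c, a, b]"
  shows "word_poly (c # alt a b n) - word_poly (alt b a n @ [c]) \<in> I"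
proof -
  obtain l where "l ^ n = 1" "\<forall>k. proportional (l ^ k) (c # alt a b k) (alt b a k @ [c])"
    using letter_through_alt[OF assms] by auto
  then show ?thesis by (metis proportional_def scal_one mult_1)
qed

lemma central_mod_alt_sum:
  assumes "a \<noteq> b"
  shows "central_mod I (alt_sum a b)"
proof -
  have own_letter: "alt_sum x y * word_poly [x] - word_poly [x] * alt_sum x y \<in> I" for x y
  proof -
    have "alt_sum x y * word_poly [x] - word_poly [x] * alt_sum x y
        = word_poly (alt y x n @ [x]) - word_poly (x # alt x y n)"
      by (simp add: alt_sum_def distrib_left distrib_right word_poly_append[symmetric] Cons_alt)
    then show ?thesis
      using vanishes_Cons_alt vanishes_alt_snoc unfolding vanishes_def Mt_ideal_def by (metis tsideal_diff)
  qed
  obtain c where c: "distinct [a, b, c]" and letters: "\<forall>v. v = a \<or> v = b \<or> v = c"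
    using var_third[OF assms] by blast
  have other_letter: "alt_sum a b * word_poly [c] - word_poly [c] * alt_sum a b \<in> I"
  proof -
    have "alt_sum a b * word_poly [c] - word_poly [c] * alt_sum a b
        = - ((word_poly (c # alt a b n) - word_poly (alt b a n @ [c]))
             + (word_poly (c # alt b a n) - word_poly (alt a b n @ [c])))"
      by (simp add: alt_sum_def distrib_left distrib_right word_poly_append[symmetric] algebra_simps)
    also have "\<dots> \<in> I"
      using letter_commutes_alt[of c a b] letter_commutes_alt[of c b a] c
      unfolding Mt_ideal_def by (intro tsideal_uminus tsideal.add) auto
    finally show ?thesis .
  qed
  have "alt_sum a b * word_poly [v] - word_poly [v] * alt_sum a b \<in> I" for v
    using letters own_letter[of a b] own_letter[of b a] other_letter
    by (auto simp: alt_sum_def add.commute)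
  then show ?thesis
    unfolding Mt_ideal_def by (rule central_mod_if_commutes_with_letters)
qed

lemma reducible_alt_snoc:
  assumes "a \<noteq> b"
  shows "reducible (alt a b n @ [a])"
proof -
  have "word_poly (alt a b n @ [a]) - alt_sum a b * word_poly [a] = - word_poly (alt b a n @ [a])"
    by (simp add: alt_sum_def distrib_right word_poly_append[symmetric])
  then have "word_poly (alt a b n @ [a]) - alt_sum a b * word_poly [a] \<in> I"
    using vanishes_alt_snoc[of b a] unfolding vanishes_def Mt_ideal_def by (metis tsideal_uminus)
  then show ?thesis
    unfolding reducible_def using central_mod_alt_sum[OF assms] n_pos
    by (intro exI[of _ "alt_sum a b"] exI[of _ "[a]"]) simp
qed

lemma alt_commute_pair:
  assumes "distinct [a, b, c]"
  shows "\<exists>s. proportional s (alt a b k @ [c, b]) ([c, b] @ alt a b k)"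
proof (induction k)
  case 0
  then show ?case using proportional_refl by auto
next
  case (Suc k)
  then obtain s where s: "proportional s (alt a b k @ [c, b]) ([c, b] @ alt a b k)"
    by blast
  obtain l where l: "proportional l [a, b, c] [c, b, a]"
    using reversal_proportional assms by blast
  have "proportional s (a # b # alt a b k @ [c, b]) (a # b # c # b # alt a b k)"
    using proportional_append[OF s, of "[a, b]" "[]"] by simp
  moreover have "proportional l (a # b # c # b # alt a b k) (c # b # a # b # alt a b k)"
    using proportional_append[OF l, of "[]" "b # alt a b k"] by simp
  ultimately show ?case
    using proportional_trans by (fastforce simp: alt_Suc)
qed

lemma reducible_alt_pivoted:
  assumes "distinct [a, b, c]"
  shows "set qs \<subseteq> {a, c} \<Longrightarrow> n + 1 \<le> k + count_list qs a \<Longrightarrow> reducible (alt a b k @ pivoted b qs)"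
proof (induction qs arbitrary: k)
  case Nil
  then obtain m where m: "k = n + 1 + m"
    by (auto simp: le_iff_add)
  have "reducible ([] @ (alt a b n @ [a]) @ (b # alt a b m))"
    using assms by (intro reducible_append reducible_alt_snoc) simp
  moreover have "alt a b k = alt a b n @ alt a b (Suc m)"
    unfolding m by (simp only: add.assoc alt_add) (simp add: alt_Suc)
  ultimately show ?case by (simp add: alt_Suc)
next
  case (Cons q qs)
  then have qs: "set qs \<subseteq> {a, c}" by simp
  show ?case
  proof (cases "q = a")
    case True
    then have "reducible (alt a b (Suc k) @ pivoted b qs)"
      using Cons.IH[OF qs] Cons.prems(2) by simp
    then show ?thesis using True by (simp add: alt_Suc_right)
  next
    case False
    then have q: "q = c" using Cons.prems(1) by auto
    then have "reducible (alt a b k @ pivoted b qs)"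
      using Cons.IH[OF qs] Cons.prems(2) assms by auto
    then have "reducible ([c, b] @ (alt a b k @ pivoted b qs) @ [])"
      by (rule reducible_append)
    moreover obtain s where "proportional s (alt a b k @ [c, b]) ([c, b] @ alt a b k)"
      using alt_commute_pair assms by blast
    then have "proportional s ([] @ (alt a b k @ [c, b]) @ pivoted b qs) ([] @ ([c, b] @ alt a b k) @ pivoted b qs)"
      by (rule proportional_append)
    ultimately show ?thesis
      using q reducible_proportional[of s] by simp
  qed
qed

lemma reducible_if_long:
  assumes "4 * n + 4 \<le> length w"
  shows "reducible w"
proof (cases "sandwich w")
  case True
  then show ?thesis using assms vanishes_if_sandwich reducible_if_vanishes by fastforce
next
  case False
  then obtain b where "has_pivot b w" using sandwich_or_pivot by blast
  then obtain u qs v where w: "w = u @ pivoted b qs @ v" and "u \<in> {[], [b]}" "length v \<le> 1"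
    using has_pivot_decomposable False unfolding pivot_decomposable_def by blast
  then have long: "2 * n + 1 \<le> length qs" using assms by auto
  have "b \<notin> set qs"
  proof
    assume "b \<in> set qs"
    then have "sandwich (u @ pivoted b qs @ v)"
      by (intro sandwich_append sandwich_pivoted)
    with False w show False by simp
  qed
  moreover obtain a where "a \<noteq> b" by (metis var.distinct(1) var.distinct(3))
  moreover obtain c where abc: "distinct [a, b, c]" and letters: "\<forall>v. v = a \<or> v = b \<or> v = c"
    using var_third[OF \<open>a \<noteq> b\<close>] by blast
  ultimately have qs: "set qs \<subseteq> {a, c}"
    by auto
  have "reducible (pivoted b qs)"
  proof (cases "n + 1 \<le> count_list qs a")
    case True
    then show ?thesis using reducible_alt_pivoted[OF abc qs, of 0] by simp
  next
    case False
    then have "n + 1 \<le> count_list qs c"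
      using count_list_two_letters[OF qs] abc long by auto
    moreover have "distinct [c, b, a]" "set qs \<subseteq> {c, a}"
      using abc qs by auto
    ultimately show ?thesis using reducible_alt_pivoted[of c b a qs 0] by simp
  qed
  then show ?thesis
    unfolding w by (rule reducible_append)
qed

definition short_words :: "fralg set" where
  "short_words = word_poly ` {w. length w < 4 * n + 4}"

lemma finite_short_words: "finite short_words"
proof -
  have "finite {w :: var list. set w \<subseteq> UNIV \<and> length w \<le> 4 * n + 4}"
  proof (rule finite_lists_length_le)
    have "(UNIV :: var set) = {X, Y, Z}"
      using var.exhaust by auto
    then show "finite (UNIV :: var set)"
      by (metis finite.emptyI finite_insert)
  qed
  then show ?thesis
    unfolding short_words_def by (intro finite_imageI) (auto elim: rev_finite_subset)
qed

lemma center_span_word_poly: "center_span I short_words (word_poly w)"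
proof (induction w rule: measure_induct_rule[of length])
  case (less w)
  show ?case
  proof (cases "length w < 4 * n + 4")
    case True
    then show ?thesis unfolding Mt_ideal_def short_words_def
      using center_span_member finite_short_words[unfolded short_words_def] by blast
  next
    case False
    then have "reducible w"
      by (intro reducible_if_long) simp
    then obtain c w' where "central_mod I c" "length w' < length w" "word_poly w - c * word_poly w' \<in> I"
      unfolding reducible_def by blast
    moreover from this(2) have "center_span I short_words (word_poly w')"
      by (rule less)
    ultimately show ?thesis
      unfolding Mt_ideal_def by (blast intro: center_span_mod center_span_mult_central)
  qed
qed

lemma center_span_all: "center_span I short_words p"
proof (induction p rule: fralg_induct)
  case zero
  then show ?case unfolding Mt_ideal_def by (rule center_span_zero)
next
  case (add_monomial p c w)
  then show ?case
    using center_span_word_poly unfolding Mt_ideal_def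
    by (intro center_span_add center_span_mult_central central_mod_scal)
qed

end

theorem mainTheorem13:
  fixes \<omega> t :: complex and n :: nat
  assumes "\<omega> ^ 3 = 1" and "\<omega> \<noteq> 1"
    and "t \<noteq> 0"
    and "n \<ge> 1" and "(- t) ^ n = 1" and "\<forall>k. 0 < k \<and> k < n \<longrightarrow> (- t) ^ k \<noteq> 1"
  shows "finite_over_center (Mt_ideal \<omega> t)"
proof -
  interpret Mt_root_of_unity \<omega> t n
    using assms by unfold_locales
  show ?thesis
    unfolding finite_over_center_iff using finite_short_words center_span_all by blast
qed

end
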